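(* Let $1\le q<p<\infty$ and $z>m_{p,q}$ with $z^*=(z^q,1)\in\mathcal J_p$. Let $D_z=\{(t_1,t_2)\in\mathbb R^2:t_1,t_2>0,\ t_1^{1/q}t_2^{-1/p}>z\}$ and $\mathscr D_z=\{(t_1,t_2,t_3)\in\mathbb R^3:t_1,t_2>0,\ t_3\in(0,1],\ t_3t_1^{1/q}t_2^{-1/p}>z\}$. Then (i) $z^*$ is the unique point at which $\Lambda_p^*$ attains its infimum over $\overline{D_z}$; (ii) $z^{**}=(z^q,1,1)$ is the unique point at which $\mathcal I_{\mathscr S}(t)=\Lambda_p^*(t_1,t_2)-\log t_3$ attains its infimum over $\overline{\mathscr D_z}$.
   Context: Let $f_p(x)=\frac{1}{2p^{1/p}\Gamma(1+1/p)}e^{-|x|^p/p}$, $m_{p,q}=(\int_{\mathbb R}|x|^qf_p(x)dx)^{1/q}$. For $\tau\in\mathbb R^2$, $\Lambda_p(\tau)=\log\int_{\mathbb R}e^{\tau_1|y|^q+\tau_2|y|^p}f_p(y)\,dy$, finite exactly on $\mathcal D_p=\mathbb R\times(-\infty,1/p)$; $\Lambda_p^*(x)=\sup_{\tau\in\mathbb R^2}(\langle x,\tau\rangle-\Lambda_p(\tau))$ (with values in $[0,\infty]$). $\mathcal J_p$ is the set of $x\in\mathbb R^2$ for which there exists (a unique) $\tau(x)\in\mathcal D_p$ with $\nabla_\tau\Lambda_p(\tau(x))=x$. $\overline{A}$ denotes closure; $\log t_3=-\infty$ convention is not needed as $\mathcal I_{\mathscr S}$ is considered for $t_3>0$ (value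 $+\infty$ if $t_3\le0$). *)

theory Defs
  imports "HOL-Analysis.Analysis"
begin

definition f_p :: "real \<Rightarrow> real \<Rightarrow> real" where
  "f_p p x = exp (- (\<bar>x\<bar> powr p) / p) / (2 * p powr (1/p) * Gamma (1 + 1/p))"

definition m_pq :: "real \<Rightarrow> real \<Rightarrow> real" where
  "m_pq p q = (LINT x|lborel. \<bar>x\<bar> powr q * f_p p x) powr (1/q)"

definition mgf_integrand :: "real \<Rightarrow> real \<Rightarrow> real \<times> real \<Rightarrow> real \<Rightarrow> real" where
  "mgf_integrand p q \<tau> y = exp (fst \<tau> * \<bar>y\<bar> powr q + snd \<tau> * \<bar>y\<bar> powr p) * f_p p y"

definition Lambda_p :: "real \<Rightarrow> real \<Rightarrow> real \<times> real \<Rightarrow> ereal" where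
  "Lambda_p p q \<tau> = (if integrable lborel (mgf_integrand p q \<tau>)
      then ereal (ln (LINT y|lborel. mgf_integrand p q \<tau> y)) else \<infinity>)"

definition D_p :: "real \<Rightarrow> (real \<times> real) set" where
  "D_p p = {\<tau>. snd \<tau> < 1/p}"

definition Lambda_star :: "real \<Rightarrow> real \<Rightarrow> real \<times> real \<Rightarrow> ereal" where
  "Lambda_star p q x = (SUP \<tau>\<in>UNIV. ereal (x \<bullet> \<tau>) - Lambda_p p q \<tau>)"

definition J_p :: "real \<Rightarrow> real \<Rightarrow> (real \<times> real) set" where
  "J_p p q = {x. \<exists>\<tau>\<in>D_p p.
      ((\<lambda>\<sigma>. ln (LINT y|lborel. mgf_integrand p q \<sigma> y)) has_derivative (\<lambda>h. x \<bullet> h)) (at \<tau>)}"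

definition D_z :: "real \<Rightarrow> real \<Rightarrow> real \<Rightarrow> (real \<times> real) set" where
  "D_z p q z = {(t1, t2). t1 > 0 \<and> t2 > 0 \<and> t1 powr (1/q) * t2 powr (-1/p) > z}"

definition DD_z :: "real \<Rightarrow> real \<Rightarrow> real \<Rightarrow> (real \<times> real \<times> real) set" where
  "DD_z p q z = {(t1, t2, t3). t1 > 0 \<and> t2 > 0 \<and> 0 < t3 \<and> t3 \<le> 1 \<and>
      t3 * t1 powr (1/q) * t2 powr (-1/p) > z}"

definition I_S :: "real \<Rightarrow> real \<Rightarrow> real \<times> real \<times> real \<Rightarrow> ereal" where
  "I_S p q t = (case t of (t1, t2, t3) \<Rightarrow>
      if t3 \<le> 0 then \<infinity> else Lambda_star p q (t1, t2) - ereal (ln t3))"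

end

(*
  Let x = (z^q, 1) be the gradient of ln mgf at t0. The tilted mgf
  tau |-> mgf tau * exp (- x . tau) is convex and critical at t0, so t0 maximises
  x . tau - ln (mgf tau) and Lambda* x = x . t0 - ln (mgf t0). Rescaling y |-> c y with
  c = t2 powr (-1/p) moves t0 to a test point adapted to (t1, t2) and gives, with a = fst t0,
    Lambda* (t1, t2) >= Lambda* x + a (t1 t2^(-q/p) - z^q) + (t2 - 1 - ln t2) / p.
  Jensen's inequality together with z > m_pq forces a > 0. On the closure of D_z we have
  t1 t2^(-q/p) >= z^q, so both correction terms are nonnegative and vanish only at (z^q, 1).
  Since t3 <= 1 both shrinks the admissible region and makes - ln t3 >= 0, part (ii) reduces
  to part (i).
*)
theory Submission
  imports Defs
begin

section \<open>The density and its absolute moments\<close>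

definition f_p_norm :: "real \<Rightarrow> real" where
  "f_p_norm p = 2 * p powr (1/p) * Gamma (1 + 1/p)"

lemma f_p_norm_pos: "p > 0 \<Longrightarrow> f_p_norm p > 0"
  unfolding f_p_norm_def by (intro mult_pos_pos Gamma_real_pos) (auto intro: add_pos_pos)

lemma f_p_eq: "f_p p x = exp (- (\<bar>x\<bar> powr p) / p) / f_p_norm p"
  unfolding f_p_def f_p_norm_def by simp

lemma f_p_pos: "p > 0 \<Longrightarrow> f_p p x > 0"
  unfolding f_p_eq using f_p_norm_pos by simp

lemma Gamma_integral_real_Ioi:
  assumes "a > (0::real)"
  shows "(\<lambda>t. t powr (a - 1) / exp t) absolutely_integrable_on {0<..}"
    and "integral {0<..} (\<lambda>t. t powr (a - 1) / exp t) = Gamma a"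
proof -
  have "((\<lambda>t. t powr (a - 1) / exp t) has_integral Gamma a) {0..}"
    by (rule Gamma_integral_real[OF assms])
  hence "((\<lambda>t. if t \<in> {0<..} then t powr (a - 1) / exp t else 0) has_integral Gamma a) {0..}"
    by (rule has_integral_spike [of "{0}", rotated 2]) auto
  hence h: "((\<lambda>t. t powr (a - 1) / exp t) has_integral Gamma a) {0<..}"
    by (subst (asm) has_integral_restrict) auto
  show "(\<lambda>t. t powr (a - 1) / exp t) absolutely_integrable_on {0<..}"
    by (rule nonnegative_absolutely_integrable_1) (use h in auto)
  show "integral {0<..} (\<lambda>t. t powr (a - 1) / exp t) = Gamma a"
    using h by (simp add: has_integral_iff)
qed

lemma powr_div_bij_Ioi:
  fixes p :: real
  assumes "p > 0"
  shows "inj_on (\<lambda>y. y powr p / p) {0<..}" and "(\<lambda>y. y powr p / p) ` {0<..} = {0<..}"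
proof -
  show "inj_on (\<lambda>y. y powr p / p) {0<..}"
  proof (rule inj_onI)
    fix x y :: real assume xy: "x \<in> {0<..}" "y \<in> {0<..}" "x powr p / p = y powr p / p"
    then have "(x powr p) powr (1/p) = (y powr p) powr (1/p)" using assms by simp
    then show "x = y" using assms xy by (simp add: powr_powr)
  qed
  show "(\<lambda>y. y powr p / p) ` {0<..} = {0<..}"
  proof (rule set_eqI, rule iffI)
    fix u :: real assume u: "u \<in> {0<..}"
    have "((p*u) powr (1/p)) powr p / p = u" using assms u by (simp add: powr_powr)
    moreover have "(p*u) powr (1/p) \<in> {0<..}" using assms u by simp
    ultimately show "u \<in> (\<lambda>y. y powr p / p) ` {0<..}" by (metis image_eqI)
  qed (use assms in auto)
qed

lemma powr_exp_neg_powr_substitution: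
  fixes p r y :: real
  assumes p: "p > 0" and y: "y > 0"
  defines "a \<equiv> (r + 1) / p"
  shows "\<bar>y powr (p - 1)\<bar> * ((y powr p / p) powr (a - 1) / exp (y powr p / p))
           = p powr (1 - a) * (y powr r * exp (- (y powr p) / p))"
proof -
  have "(y powr p / p) powr (a - 1) = y powr (p * (a - 1)) * p powr (1 - a)"
    using y p by (simp add: powr_divide powr_powr powr_diff divide_simps powr_add[symmetric]
        right_diff_distrib)
  moreover have "p * (a - 1) = r + 1 - p" unfolding a_def using p by (simp add: field_simps)
  moreover have "y powr (p - 1) * y powr (r + 1 - p) = y powr r"
    using y by (simp add: powr_add[symmetric])
  ultimately show ?thesis using y by (simp add: exp_minus field_simps)
qed

text \<open>The substitution \<open>t = y powr p / p\<close> turns this into the Gamma integral.\<close>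
lemma powr_exp_neg_powr_integral_Ioi:
  fixes p r :: real
  assumes p: "p > 0" and r: "r \<ge> 0"
  shows "(\<lambda>y. y powr r * exp (- (y powr p) / p)) absolutely_integrable_on {0<..}"
    and "integral {0<..} (\<lambda>y. y powr r * exp (- (y powr p) / p)) = p powr ((r+1)/p - 1) * Gamma ((r+1)/p)"
proof -
  define a where "a = (r + 1) / p"
  have a: "a > 0" using p r by (simp add: a_def)
  let ?h = "\<lambda>y. y powr r * exp (- (y powr p) / p)"
  have der: "((\<lambda>y. y powr p / p) has_field_derivative y powr (p - 1)) (at y within {0<..})"
    if "y \<in> {0<..}" for y
    using that p by (auto intro!: derivative_eq_intros simp: powr_diff field_simps)
  let ?g = "\<lambda>y. \<bar>y powr (p - 1)\<bar> * ((y powr p / p) powr (a - 1) / exp (y powr p / p))"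
  have cov: "?g absolutely_integrable_on {0<..} \<and> integral {0<..} ?g = Gamma a"
    using has_absolute_integral_change_of_variables_1'[OF _ der powr_div_bij_Ioi(1)[OF p],
        where f = "\<lambda>t. t powr (a - 1) / exp t" and b = "Gamma a"]
      powr_div_bij_Ioi(2)[OF p] Gamma_integral_real_Ioi[OF a] by auto
  have g_eq: "?g y = p powr (1 - a) * ?h y" if "y \<in> {0<..}" for y
    using powr_exp_neg_powr_substitution[OF p] that unfolding a_def by auto
  have sub: "(\<lambda>y. p powr (1 - a) * ?h y) absolutely_integrable_on {0<..}"
    by (rule absolutely_integrable_spike[where f = ?g and S = "{}"]) (use cov g_eq in auto)
  have sub_int: "integral {0<..} (\<lambda>y. p powr (1 - a) * ?h y) = Gamma a"
    using cov integral_cong[of "{0<..}" ?g "\<lambda>y. p powr (1 - a) * ?h y"] g_eq by simp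
  have pp: "p powr (a - 1) * p powr (1 - a) = 1" using p by (simp add: powr_add[symmetric])
  have scaled: "?h = (\<lambda>y. p powr (a - 1) * (p powr (1 - a) * ?h y))"
    using pp by (simp add: mult.assoc[symmetric])
  show "?h absolutely_integrable_on {0<..}"
    by (subst scaled) (use absolutely_integrable_scaleR_left[OF sub, of "p powr (a - 1)"] in simp)
  show "integral {0<..} ?h = p powr ((r+1)/p - 1) * Gamma ((r+1)/p)"
  proof -
    have "p powr (1 - a) * integral {0<..} ?h = Gamma a"
      using sub_int integral_cmul[of "{0<..}" "p powr (1 - a)" ?h] by simp
    then have "integral {0<..} ?h = p powr (a - 1) * Gamma a"
      using pp by (metis mult.assoc mult_1)
    then show ?thesis by (simp add: a_def)
  qed
qed

lemma abs_powr_exp_neg_powr_lborel: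
  fixes p r :: real
  assumes p: "p > 0" and r: "r \<ge> 0"
  shows "integrable lborel (\<lambda>y. \<bar>y\<bar> powr r * exp (- (\<bar>y\<bar> powr p) / p))"
    and "(LINT y|lborel. \<bar>y\<bar> powr r * exp (- (\<bar>y\<bar> powr p) / p))
           = 2 * (p powr ((r+1)/p - 1) * Gamma ((r+1)/p))"
proof -
  let ?h = "\<lambda>y::real. y powr r * exp (- (y powr p) / p)"
  define G where "G = (\<lambda>y::real. indicator {0<..} y *\<^sub>R ?h y)"
  define K where "K = p powr ((r+1)/p - 1) * Gamma ((r+1)/p)"
  have M: "set_integrable lebesgue {0<..} ?h" "integral {0<..} ?h = K"
    using powr_exp_neg_powr_integral_Ioi[OF p r]
    unfolding K_def absolutely_integrable_on_def by auto
  have Gm: "G \<in> borel_measurable lborel" unfolding G_def by measurable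
  have iG: "integrable lborel G"
    using M(1) integrable_completion[OF Gm] unfolding set_integrable_def G_def by simp
  have LG: "integral\<^sup>L lborel G = K"
    using set_lebesgue_integral_eq_integral(2)[OF M(1)] M(2) integral_completion[OF Gm]
    unfolding set_lebesgue_integral_def G_def by simp
  have iG': "integrable lborel (\<lambda>y. G (0 + (-1) * y))"
    using lborel_integrable_real_affine_iff[of "-1" G 0] iG by simp
  have LG': "integral\<^sup>L lborel (\<lambda>y. G (0 + (-1) * y)) = K"
    using lborel_integral_real_affine[of "-1" G 0] LG by simp
  have split: "(\<lambda>y. \<bar>y\<bar> powr r * exp (- (\<bar>y\<bar> powr p) / p)) = (\<lambda>y. G y + G (0 + (-1) * y))"
  proof
    fix y :: real
    show "\<bar>y\<bar> powr r * exp (- (\<bar>y\<bar> powr p) / p) = G y + G (0 + (-1) * y)"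
      unfolding G_def by (cases "y > 0"; cases "y < 0") (auto simp: indicator_def)
  qed
  show "integrable lborel (\<lambda>y. \<bar>y\<bar> powr r * exp (- (\<bar>y\<bar> powr p) / p))"
    unfolding split using iG iG' by simp
  show "(LINT y|lborel. \<bar>y\<bar> powr r * exp (- (\<bar>y\<bar> powr p) / p))
           = 2 * (p powr ((r+1)/p - 1) * Gamma ((r+1)/p))"
    unfolding split using iG iG' LG LG' K_def by simp
qed

lemma f_p_norm_eq_Gamma: "p > 0 \<Longrightarrow> f_p_norm p = 2 * (p powr (1/p - 1) * Gamma (1/p))"
proof -
  assume p: "p > 0"
  have "1/p \<notin> \<int>\<^sub>\<le>\<^sub>0"
    using p by (auto elim!: nonpos_Ints_cases)
      (metis divide_pos_pos less_le_not_le of_int_le_0_iff zero_less_one)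
  then have "Gamma (1 + 1/p) = (1/p) * Gamma (1/p)"
    using Gamma_plus1[of "1/p"] by (simp add: add_ac)
  moreover have "p powr (1/p - 1) = p powr (1/p) / p" using p by (simp add: powr_diff)
  ultimately show ?thesis unfolding f_p_norm_def by simp
qed

lemma integrable_abs_powr_f_p:
  assumes "p > 0" "r \<ge> 0"
  shows "integrable lborel (\<lambda>y. \<bar>y\<bar> powr r * f_p p y)"
  using integrable_divide[OF abs_powr_exp_neg_powr_lborel(1)[OF assms], of "f_p_norm p"]
  unfolding f_p_eq by (simp only: times_divide_eq_right)

lemma f_p_AE_abs_powr_zero:
  "AE y in lborel. \<bar>y\<bar> powr 0 * exp (- (\<bar>y\<bar> powr p) / p) / f_p_norm p = f_p p y"
  by (rule eventually_mono[OF AE_lborel_singleton[of 0]]) (simp add: f_p_eq)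

lemma f_p_integrable: "p > 0 \<Longrightarrow> integrable lborel (f_p p)"
  by (rule integrable_cong_AE_imp[OF integrable_divide[OF abs_powr_exp_neg_powr_lborel(1)]
        _ f_p_AE_abs_powr_zero]) (auto simp: f_p_def)

lemma integral_f_p:
  assumes "p > 0"
  shows "(LINT y|lborel. f_p p y) = 1"
proof -
  have "(LINT y|lborel. f_p p y)
        = (LINT y|lborel. \<bar>y\<bar> powr 0 * exp (- (\<bar>y\<bar> powr p) / p) / f_p_norm p)"
    by (rule integral_cong_AE[OF _ _ f_p_AE_abs_powr_zero, symmetric]) (auto simp: f_p_def)
  also have "\<dots> = (LINT y|lborel. \<bar>y\<bar> powr 0 * exp (- (\<bar>y\<bar> powr p) / p)) / f_p_norm p"
    by (rule integral_divide_zero)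
  also have "\<dots> = 1"
    using abs_powr_exp_neg_powr_lborel(2)[OF assms order.refl] f_p_norm_eq_Gamma[OF assms]
      Gamma_real_pos[of "1/p"] assms by (simp add: less_imp_neq[symmetric])
  finally show ?thesis .
qed

lemma integral_abs_powr_p_f_p:
  assumes "p > 0"
  shows "(LINT y|lborel. \<bar>y\<bar> powr p * f_p p y) = 1"
proof -
  have "(LINT y|lborel. \<bar>y\<bar> powr p * f_p p y)
        = (LINT y|lborel. \<bar>y\<bar> powr p * exp (- (\<bar>y\<bar> powr p) / p)) / f_p_norm p"
    unfolding f_p_eq times_divide_eq_right by (rule integral_divide_zero)
  also have "\<dots> = f_p_norm p / f_p_norm p"
    using abs_powr_exp_neg_powr_lborel(2)[OF assms less_imp_le[OF assms]] assms
    by (simp add: f_p_norm_def add_divide_distrib)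
  also have "\<dots> = 1" using f_p_norm_pos[OF assms] by simp
  finally show ?thesis .
qed

section \<open>The moment generating function\<close>

abbreviation mgf :: "real \<Rightarrow> real \<Rightarrow> real \<times> real \<Rightarrow> real" where
  "mgf p q \<sigma> \<equiv> LINT y|lborel. mgf_integrand p q \<sigma> y"

lemma mgf_integrand_pos: "p > 0 \<Longrightarrow> mgf_integrand p q \<sigma> y > 0"
  unfolding mgf_integrand_def using f_p_pos by simp

lemma mgf_integrand_measurable [measurable]: "mgf_integrand p q \<sigma> \<in> borel_measurable borel"
  unfolding mgf_integrand_def f_p_def by measurable

lemma mgf_integrand_zero: "mgf_integrand p q (0, 0) = f_p p"
  unfolding mgf_integrand_def by auto

lemma mgf_integrand_eq:
  "mgf_integrand p q \<sigma> y = exp (fst \<sigma> * \<bar>y\<bar> powr q + (snd \<sigma> - 1/p) * \<bar>y\<bar> powr p) / f_p_norm p"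
  unfolding mgf_integrand_def f_p_eq
  by (simp add: exp_add[symmetric] exp_diff algebra_simps diff_divide_distrib)

lemma mgf_integrand_rescale:
  assumes "c > 0"
  shows "mgf_integrand p q (fst \<sigma> * c powr q, (snd \<sigma> - 1/p) * c powr p + 1/p) y
           = mgf_integrand p q \<sigma> (c * y)"
  unfolding mgf_integrand_eq using assms by (simp add: abs_mult powr_mult algebra_simps)

lemma mgf_rescale:
  assumes "c > 0"
  shows "integrable lborel (mgf_integrand p q (fst \<sigma> * c powr q, (snd \<sigma> - 1/p) * c powr p + 1/p))
           \<longleftrightarrow> integrable lborel (mgf_integrand p q \<sigma>)"
    and "mgf p q (fst \<sigma> * c powr q, (snd \<sigma> - 1/p) * c powr p + 1/p) = mgf p q \<sigma> / c"
proof -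
  have e: "mgf_integrand p q (fst \<sigma> * c powr q, (snd \<sigma> - 1/p) * c powr p + 1/p)
             = (\<lambda>y. mgf_integrand p q \<sigma> (0 + c * y))"
    using mgf_integrand_rescale[OF assms] by auto
  show "integrable lborel (mgf_integrand p q (fst \<sigma> * c powr q, (snd \<sigma> - 1/p) * c powr p + 1/p))
           \<longleftrightarrow> integrable lborel (mgf_integrand p q \<sigma>)"
    unfolding e using lborel_integrable_real_affine_iff[of c "mgf_integrand p q \<sigma>" 0] assms by simp
  show "mgf p q (fst \<sigma> * c powr q, (snd \<sigma> - 1/p) * c powr p + 1/p) = mgf p q \<sigma> / c"
    unfolding e using lborel_integral_real_affine[of c "mgf_integrand p q \<sigma>" 0] assms by simp
qed

lemma integrable_mgf_integrand_mono:
  assumes "p > 0" "integrable lborel (mgf_integrand p q \<sigma>)" "fst \<tau> \<le> fst \<sigma>" "snd \<tau> \<le> snd \<sigma>"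
  shows "integrable lborel (mgf_integrand p q \<tau>)"
proof (rule Bochner_Integration.integrable_bound[OF assms(2) _ AE_I2])
  fix y
  have "fst \<tau> * \<bar>y\<bar> powr q + snd \<tau> * \<bar>y\<bar> powr p
        \<le> fst \<sigma> * \<bar>y\<bar> powr q + snd \<sigma> * \<bar>y\<bar> powr p"
    using assms(3,4) by (intro add_mono mult_right_mono) auto
  then show "norm (mgf_integrand p q \<tau> y) \<le> norm (mgf_integrand p q \<sigma> y)"
    using mgf_integrand_pos[OF assms(1)] f_p_pos[OF assms(1), of y] unfolding mgf_integrand_def
    by (auto simp: abs_mult intro!: mult_right_mono)
qed simp

lemma mgf_snd:
  assumes p: "p > 0" and t: "t < 1/p"
  shows "integrable lborel (mgf_integrand p q (0, t))" and "mgf p q (0, t) = (1 - p * t) powr (-1/p)"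
proof -
  define c where "c = (1 - p * t) powr (1/p)"
  have pt: "1 - p * t > 0" using p t by (simp add: field_simps)
  have c: "c > 0" unfolding c_def using pt by simp
  have "c powr p = 1 - p * t" unfolding c_def using pt p by (simp add: powr_powr)
  then have e: "(fst (0::real, 0::real) * c powr q, (snd (0::real, 0::real) - 1/p) * c powr p + 1/p) = (0, t)"
    using p by (simp add: field_simps)
  show "integrable lborel (mgf_integrand p q (0, t))"
    using mgf_rescale(1)[OF c, of p q "(0, 0)"] f_p_integrable[OF p]
    unfolding e mgf_integrand_zero by simp
  have "mgf p q (0, t) = 1 / c"
    using mgf_rescale(2)[OF c, of p q "(0, 0)"] integral_f_p[OF p] unfolding e mgf_integrand_zero by simp
  then show "mgf p q (0, t) = (1 - p * t) powr (-1/p)"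
    unfolding c_def using pt by (simp add: powr_minus_divide)
qed

definition abs_moment :: "real \<Rightarrow> real \<Rightarrow> real" where
  "abs_moment p q = (LINT y|lborel. \<bar>y\<bar> powr q * f_p p y)"

lemma abs_moment_less_powr:
  assumes "p > 0" "q > 0" "z > m_pq p q"
  shows "abs_moment p q < z powr q"
proof -
  have M0: "abs_moment p q \<ge> 0"
    unfolding abs_moment_def using f_p_pos[OF assms(1)]
    by (intro integral_nonneg_AE AE_I2 mult_nonneg_nonneg) (auto intro: less_imp_le)
  have m: "m_pq p q = abs_moment p q powr (1/q)" unfolding m_pq_def abs_moment_def by simp
  have "m_pq p q powr q < z powr q"
    using assms(2,3) by (intro powr_less_mono2) (auto simp: m)
  also have "m_pq p q powr q = abs_moment p q" unfolding m using M0 assms(2) by (simp add: powr_powr)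
  finally show ?thesis .
qed

lemma exp_le_mgf:
  assumes p: "p > 0" and q: "q \<ge> 0" and int: "integrable lborel (mgf_integrand p q \<tau>)"
  shows "exp (fst \<tau> * abs_moment p q + snd \<tau>) \<le> mgf p q \<tau>"
proof -
  define c where "c = fst \<tau> * abs_moment p q + snd \<tau>"
  let ?lin = "\<lambda>y. exp c * ((1 - c) * f_p p y + fst \<tau> * (\<bar>y\<bar> powr q * f_p p y)
                              + snd \<tau> * (\<bar>y\<bar> powr p * f_p p y))"
  \<comment> \<open>Jensen's inequality, via the tangent \<open>exp u \<ge> exp c * (1 + u - c)\<close> at the mean \<open>c\<close>
    of \<open>u = fst \<tau> * \<bar>Y\<bar> powr q + snd \<tau> * \<bar>Y\<bar> powr p\<close> (recall \<open>E \<bar>Y\<bar> powr p = 1\<close>).\<close>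
  have tangent: "?lin y \<le> mgf_integrand p q \<tau> y" for y
  proof -
    let ?u = "fst \<tau> * \<bar>y\<bar> powr q + snd \<tau> * \<bar>y\<bar> powr p"
    have "exp c * (1 + (?u - c)) \<le> exp c * exp (?u - c)"
      by (intro mult_left_mono) auto
    also have "\<dots> = exp ?u" by (simp add: exp_diff)
    finally have "exp c * (1 + (?u - c)) * f_p p y \<le> exp ?u * f_p p y"
      using f_p_pos[OF p, of y] by (intro mult_right_mono) auto
    then show ?thesis unfolding mgf_integrand_def by (simp add: algebra_simps)
  qed
  have ints: "integrable lborel (f_p p)" "integrable lborel (\<lambda>y. \<bar>y\<bar> powr q * f_p p y)"
      "integrable lborel (\<lambda>y. \<bar>y\<bar> powr p * f_p p y)"
    using f_p_integrable[OF p] integrable_abs_powr_f_p[OF p] q p by auto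
  have "(LINT y|lborel. ?lin y) = exp c * ((1 - c) * 1 + fst \<tau> * abs_moment p q + snd \<tau> * 1)"
    using ints integral_f_p[OF p] integral_abs_powr_p_f_p[OF p] unfolding abs_moment_def by simp
  also have "\<dots> = exp c" unfolding c_def by simp
  finally have "(LINT y|lborel. ?lin y) = exp c" .
  moreover have "integrable lborel ?lin"
    using ints by (intro integrable_mult_right integrable_add) auto
  ultimately show ?thesis
    using integral_mono[OF _ int tangent] unfolding c_def by simp
qed

lemma mgf_pos:
  "p > 0 \<Longrightarrow> q \<ge> 0 \<Longrightarrow> integrable lborel (mgf_integrand p q \<tau>) \<Longrightarrow> mgf p q \<tau> > 0"
  using exp_le_mgf by (meson exp_gt_zero less_le_trans)

lemma ln_mgf_ge:
  "p > 0 \<Longrightarrow> q \<ge> 0 \<Longrightarrow> integrable lborel (mgf_integrand p q \<tau>)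
    \<Longrightarrow> fst \<tau> * abs_moment p q + snd \<tau> \<le> ln (mgf p q \<tau>)"
  using exp_le_mgf mgf_pos by (metis exp_le_cancel_iff exp_ln)

lemma mgf_integrand_tilted_convex:
  fixes \<sigma> \<tau> x :: "real \<times> real"
  assumes p: "p > 0" and s: "0 \<le> s" "s \<le> 1"
  defines "\<rho> \<equiv> (1 - s) *\<^sub>R \<sigma> + s *\<^sub>R \<tau>"
  shows "mgf_integrand p q \<rho> y * exp (- (x \<bullet> \<rho>))
         \<le> (1 - s) * (mgf_integrand p q \<sigma> y * exp (- (x \<bullet> \<sigma>)))
           + s * (mgf_integrand p q \<tau> y * exp (- (x \<bullet> \<tau>)))"
proof -
  define a where "a = (\<lambda>\<sigma>. \<sigma> \<bullet> (\<bar>y\<bar> powr q - fst x, \<bar>y\<bar> powr p - snd x))"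
  have tilt: "mgf_integrand p q \<sigma> y * exp (- (x \<bullet> \<sigma>)) = exp (a \<sigma>) * f_p p y" for \<sigma>
    unfolding mgf_integrand_def a_def
    by (cases \<sigma>; cases x) (simp add: algebra_simps flip: exp_add)
  have "exp (a \<rho>) \<le> (1 - s) * exp (a \<sigma>) + s * exp (a \<tau>)"
    using convex_onD[OF exp_convex, of s "a \<sigma>" "a \<tau>"] s
    unfolding \<rho>_def a_def by (simp add: inner_add_left)
  then have "exp (a \<rho>) * f_p p y \<le> ((1 - s) * exp (a \<sigma>) + s * exp (a \<tau>)) * f_p p y"
    using f_p_pos[OF p, of y] by (intro mult_right_mono) auto
  then show ?thesis unfolding tilt by (simp add: algebra_simps)
qed

lemma mgf_tilted_convex:
  fixes \<sigma> \<tau> x :: "real \<times> real"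
  assumes p: "p > 0" and s: "0 \<le> s" "s \<le> 1"
    and int: "integrable lborel (mgf_integrand p q \<sigma>)" "integrable lborel (mgf_integrand p q \<tau>)"
  defines "\<rho> \<equiv> (1 - s) *\<^sub>R \<sigma> + s *\<^sub>R \<tau>"
  shows "integrable lborel (mgf_integrand p q \<rho>)"
    and "mgf p q \<rho> * exp (- (x \<bullet> \<rho>))
         \<le> (1 - s) * (mgf p q \<sigma> * exp (- (x \<bullet> \<sigma>))) + s * (mgf p q \<tau> * exp (- (x \<bullet> \<tau>)))"
proof -
  have bound: "integrable lborel (\<lambda>y. (1 - s) * (mgf_integrand p q \<sigma> y * exp (- (x \<bullet> \<sigma>)))
                 + s * (mgf_integrand p q \<tau> y * exp (- (x \<bullet> \<tau>))))" for x :: "real \<times> real"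
    using int by simp
  show int_\<rho>: "integrable lborel (mgf_integrand p q \<rho>)"
  proof (rule Bochner_Integration.integrable_bound[OF bound[of 0] _ AE_I2])
    fix y
    show "norm (mgf_integrand p q \<rho> y) \<le> norm ((1 - s) * (mgf_integrand p q \<sigma> y * exp (- (0 \<bullet> \<sigma>)))
                 + s * (mgf_integrand p q \<tau> y * exp (- (0 \<bullet> \<tau>))))"
      using mgf_integrand_tilted_convex[OF p s, where \<sigma> = \<sigma> and \<tau> = \<tau> and x = 0 and q = q and y = y]
        mgf_integrand_pos[OF p, of q \<rho> y]
      unfolding \<rho>_def by simp
  qed simp
  have "mgf p q \<rho> * exp (- (x \<bullet> \<rho>)) = (LINT y|lborel. mgf_integrand p q \<rho> y * exp (- (x \<bullet> \<rho>)))"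
    by simp
  also have "\<dots> \<le> (LINT y|lborel. (1 - s) * (mgf_integrand p q \<sigma> y * exp (- (x \<bullet> \<sigma>)))
                 + s * (mgf_integrand p q \<tau> y * exp (- (x \<bullet> \<tau>))))"
    using mgf_integrand_tilted_convex[OF p s] int_\<rho> bound unfolding \<rho>_def
    by (intro integral_mono) auto
  also have "\<dots> = (1 - s) * (mgf p q \<sigma> * exp (- (x \<bullet> \<sigma>))) + s * (mgf p q \<tau> * exp (- (x \<bullet> \<tau>)))"
    using int by simp
  finally show "mgf p q \<rho> * exp (- (x \<bullet> \<rho>))
         \<le> (1 - s) * (mgf p q \<sigma> * exp (- (x \<bullet> \<sigma>))) + s * (mgf p q \<tau> * exp (- (x \<bullet> \<tau>)))" .
qed

lemma Lambda_star_ge: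
  assumes "integrable lborel (mgf_integrand p q \<tau>)"
  shows "ereal (x \<bullet> \<tau> - ln (mgf p q \<tau>)) \<le> Lambda_star p q x"
proof -
  have "ereal (x \<bullet> \<tau>) - Lambda_p p q \<tau> = ereal (x \<bullet> \<tau> - ln (mgf p q \<tau>))"
    unfolding Lambda_p_def using assms by simp
  then show ?thesis
    unfolding Lambda_star_def using SUP_upper[of \<tau> UNIV "\<lambda>\<tau>. ereal (x \<bullet> \<tau>) - Lambda_p p q \<tau>"] by simp
qed

lemma Lambda_star_snd_zero:
  assumes p: "p > 0"
  shows "Lambda_star p q (t1, 0) = \<infinity>"
proof (rule ereal_top)
  fix B :: real
  define t where "t = (1 - exp (p * B)) / p"
  have t: "t < 1/p" unfolding t_def using p by (simp add: divide_strict_right_mono)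
  have "1 - p * t = exp (p * B)" unfolding t_def using p by simp
  then have "ln (mgf p q (0, t)) = - B"
    unfolding mgf_snd(2)[OF p t] using p by (simp add: ln_powr)
  then show "ereal B \<le> Lambda_star p q (t1, 0)"
    using Lambda_star_ge[OF mgf_snd(1)[OF p t, of q], of "(t1, 0)"] by simp
qed

text \<open>The test point is \<open>(a, b)\<close> rescaled by \<open>c = t2 powr (-1/p)\<close> as in \<open>mgf_rescale\<close>.\<close>
lemma Lambda_star_ge_rescaled:
  assumes p: "p > 0" and q: "q \<ge> 0" and t2: "t2 > 0"
    and int: "integrable lborel (mgf_integrand p q (a, b))"
  shows "ereal (a * t1 * t2 powr (-q/p) + b - ln (mgf p q (a, b)) + (t2 - 1 - ln t2) / p)
           \<le> Lambda_star p q (t1, t2)"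
proof -
  define c where "c = t2 powr (-1/p)"
  have c: "c > 0" unfolding c_def using t2 by simp
  have cq: "c powr q = t2 powr (-q/p)" unfolding c_def using t2 by (simp add: powr_powr)
  have "c powr p = t2 powr (-1)" unfolding c_def using t2 p by (simp only: powr_powr) simp
  then have cp: "c powr p = 1 / t2" using t2 by (simp add: powr_minus_divide)
  define \<tau> where "\<tau> = (a * c powr q, (b - 1/p) * c powr p + 1/p)"
  have int_\<tau>: "integrable lborel (mgf_integrand p q \<tau>)"
    unfolding \<tau>_def using mgf_rescale(1)[OF c, of p q "(a, b)"] int by simp
  have "ln (mgf p q \<tau>) = ln (mgf p q (a, b) / c)"
    unfolding \<tau>_def using mgf_rescale(2)[OF c, of p q "(a, b)"] by simp
  also have "\<dots> = ln (mgf p q (a, b)) + ln t2 / p"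
    unfolding c_def using mgf_pos[OF p q int] t2 by (simp add: ln_div ln_powr)
  finally have ln_\<tau>: "ln (mgf p q \<tau>) = ln (mgf p q (a, b)) + ln t2 / p" .
  have "(t1, t2) \<bullet> \<tau> = a * t1 * t2 powr (-q/p) + b + (t2 - 1) / p"
    unfolding \<tau>_def cq cp using t2 p by (simp add: field_simps)
  then have "(t1, t2) \<bullet> \<tau> - ln (mgf p q \<tau>)
      = a * t1 * t2 powr (-q/p) + b - ln (mgf p q (a, b)) + (t2 - 1 - ln t2) / p"
    unfolding ln_\<tau> by (simp add: diff_divide_distrib)
  then show ?thesis using Lambda_star_ge[OF int_\<tau>, of "(t1, t2)"] by simp
qed

lemma convex_chord_right_deriv_zero_le:
  fixes g :: "real \<Rightarrow> real"
  assumes chord: "\<And>s. 0 \<le> s \<Longrightarrow> s \<le> 1 \<Longrightarrow> g s \<le> (1 - s) * g 0 + s * g 1"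
    and deriv: "(g has_field_derivative 0) (at 0 within {0..1})"
  shows "g 0 \<le> g 1"
proof -
  have "((\<lambda>s. (g s - g 0) / s) \<longlongrightarrow> 0) (at_right 0)"
    using deriv unfolding has_field_derivative_iff at_within_Icc_at_right[OF zero_less_one] by simp
  moreover have "\<forall>\<^sub>F s in at_right 0. (g s - g 0) / s \<le> g 1 - g 0"
  proof (rule eventually_at_rightI[of 0 1])
    fix s :: real assume s: "s \<in> {0<..<1}"
    then have "g s - g 0 \<le> s * (g 1 - g 0)" using chord[of s] by (simp add: algebra_simps)
    then show "(g s - g 0) / s \<le> g 1 - g 0" using s by (simp add: divide_le_eq mult.commute)
  qed simp
  ultimately have "0 \<le> g 1 - g 0" by (rule tendsto_upperbound) simp
  then show ?thesis by simp
qed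

section \<open>Gradient points of the log-mgf\<close>

locale mgf_gradient =
  fixes p q :: real and x t0 :: "real \<times> real"
  assumes p_pos: "p > 0" and q_nonneg: "q \<ge> 0" and x_nonzero: "x \<noteq> 0"
    and gradient: "((\<lambda>\<sigma>. ln (mgf p q \<sigma>)) has_derivative (\<lambda>h. x \<bullet> h)) (at t0)"
begin

lemma directional_derivative:
  "((\<lambda>s. ln (mgf p q (t0 + s *\<^sub>R h))) has_field_derivative x \<bullet> h) (at 0 within S)"
proof -
  have "((\<lambda>s::real. t0 + s *\<^sub>R h) has_derivative (\<lambda>s. s *\<^sub>R h)) (at 0 within S)"
    by (auto intro!: derivative_eq_intros)
  moreover have "((\<lambda>\<sigma>. ln (mgf p q \<sigma>)) has_derivative (\<lambda>h. x \<bullet> h)) (at (t0 + 0 *\<^sub>R h))"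
    using gradient by simp
  ultimately have "((\<lambda>s. ln (mgf p q (t0 + s *\<^sub>R h))) has_derivative (\<lambda>s. x \<bullet> (s *\<^sub>R h)))
      (at 0 within S)"
    by (rule has_derivative_compose)
  then show ?thesis by (rule has_derivative_imp_has_field_derivative) simp
qed

lemma difference_quotient_tendsto:
  "((\<lambda>s. (ln (mgf p q (t0 + s *\<^sub>R h)) - ln (mgf p q t0)) / s) \<longlongrightarrow> x \<bullet> h) (at_right 0)"
  using directional_derivative[of h "{0..1}"]
  unfolding has_field_derivative_iff at_within_Icc_at_right[OF zero_less_one] by simp

lemma integrable_at_gradient_point: "integrable lborel (mgf_integrand p q t0)"
proof (rule ccontr)
  assume not_int: "\<not> integrable lborel (mgf_integrand p q t0)"
  \<comment> \<open>Then \<open>ln (mgf p q \<sigma>)\<close> is the junk value \<open>ln 0 = 0\<close> for all \<open>\<sigma> \<ge> t0\<close>,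
    forcing \<open>x = 0\<close>.\<close>
  have "x \<bullet> h = 0" if h: "fst h \<ge> 0" "snd h \<ge> 0" for h
  proof -
    note difference_quotient_tendsto[of h]
    moreover have "((\<lambda>s. (ln (mgf p q (t0 + s *\<^sub>R h)) - ln (mgf p q t0)) / s) \<longlongrightarrow> 0) (at_right 0)"
    proof (rule tendsto_eventually, rule eventually_at_rightI[of 0 1])
      fix s :: real assume "s \<in> {0<..<1}"
      then have "\<not> integrable lborel (mgf_integrand p q (t0 + s *\<^sub>R h))"
        using not_int integrable_mgf_integrand_mono[OF p_pos, of q "t0 + s *\<^sub>R h" t0] h by auto
      then show "(ln (mgf p q (t0 + s *\<^sub>R h)) - ln (mgf p q t0)) / s = 0"
        using not_int by (simp add: not_integrable_integral_eq)
    qed simp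
    ultimately show ?thesis by (rule tendsto_unique[OF trivial_limit_at_right_real])
  qed
  from this[of "(1, 0)"] this[of "(0, 1)"] have "x = 0" by (cases x) (simp add: zero_prod_def)
  with x_nonzero show False ..
qed

lemma ln_mgf_tilted_le:
  assumes int: "integrable lborel (mgf_integrand p q \<tau>)"
  shows "x \<bullet> \<tau> - ln (mgf p q \<tau>) \<le> x \<bullet> t0 - ln (mgf p q t0)"
proof -
  define \<rho> where "\<rho> = (\<lambda>s::real. (1 - s) *\<^sub>R t0 + s *\<^sub>R \<tau>)"
  define g where "g = (\<lambda>s. mgf p q (\<rho> s) * exp (- (x \<bullet> \<rho> s)))"
  define \<psi> where "\<psi> = (\<lambda>s. ln (mgf p q (t0 + s *\<^sub>R (\<tau> - t0))) - x \<bullet> (t0 + s *\<^sub>R (\<tau> - t0)))"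
  have \<rho>_eq: "\<rho> s = t0 + s *\<^sub>R (\<tau> - t0)" for s
    unfolding \<rho>_def by (simp add: algebra_simps)
  have g_exp: "g s = exp (\<psi> s)" if "s \<in> {0..1}" for s
  proof -
    have "mgf p q (\<rho> s) > 0"
      using that mgf_pos[OF p_pos q_nonneg mgf_tilted_convex(1)[OF p_pos _ _ integrable_at_gradient_point int]]
      unfolding \<rho>_def by simp
    then show ?thesis unfolding g_def \<psi>_def \<rho>_eq by (simp add: exp_diff exp_minus divide_inverse)
  qed
  have lin: "((\<lambda>s. x \<bullet> (t0 + s *\<^sub>R (\<tau> - t0))) has_field_derivative x \<bullet> (\<tau> - t0)) (at 0 within {0..1})"
    by (auto intro!: derivative_eq_intros simp: inner_add_right)
  have "(\<psi> has_field_derivative x \<bullet> (\<tau> - t0) - x \<bullet> (\<tau> - t0)) (at 0 within {0..1})"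
    unfolding \<psi>_def by (rule DERIV_diff[OF directional_derivative lin])
  then have "((\<lambda>s. exp (\<psi> s)) has_field_derivative exp (\<psi> 0) * (x \<bullet> (\<tau> - t0) - x \<bullet> (\<tau> - t0)))
      (at 0 within {0..1})"
    by (rule DERIV_chain2[OF DERIV_exp])
  then have "((\<lambda>s. exp (\<psi> s)) has_field_derivative 0) (at 0 within {0..1})" by simp
  then have "(g has_field_derivative 0) (at 0 within {0..1})"
    by (rule has_field_derivative_transform_within[OF _ zero_less_one]) (auto simp: g_exp)
  moreover have "g s \<le> (1 - s) * g 0 + s * g 1" if "0 \<le> s" "s \<le> 1" for s
    using mgf_tilted_convex(2)[OF p_pos that integrable_at_gradient_point int]
    unfolding g_def \<rho>_def by simp
  ultimately have "g 0 \<le> g 1" by (intro convex_chord_right_deriv_zero_le)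
  then have "\<psi> 0 \<le> \<psi> 1" by (simp add: g_exp)
  then show ?thesis unfolding \<psi>_def by simp
qed

lemma Lambda_star_gradient: "Lambda_star p q x = ereal (x \<bullet> t0 - ln (mgf p q t0))"
proof (rule antisym)
  show "Lambda_star p q x \<le> ereal (x \<bullet> t0 - ln (mgf p q t0))"
    unfolding Lambda_star_def
  proof (rule SUP_least)
    fix \<tau> :: "real \<times> real"
    show "ereal (x \<bullet> \<tau>) - Lambda_p p q \<tau> \<le> ereal (x \<bullet> t0 - ln (mgf p q t0))"
      using ln_mgf_tilted_le[of \<tau>] unfolding Lambda_p_def by auto
  qed
  show "ereal (x \<bullet> t0 - ln (mgf p q t0)) \<le> Lambda_star p q x"
    by (rule Lambda_star_ge[OF integrable_at_gradient_point])
qed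

lemma ln_mgf_gradient_point_le: "ln (mgf p q t0) \<le> x \<bullet> t0"
  using ln_mgf_tilted_le[OF f_p_integrable[OF p_pos, folded mgf_integrand_zero[of p q]]]
  by (cases x) (simp add: mgf_integrand_zero integral_f_p[OF p_pos])

lemma gradient_point_ne_origin:
  assumes "abs_moment p q < fst x"
  shows "t0 \<noteq> (0, 0)"
proof
  assume t0: "t0 = (0, 0)"
  note difference_quotient_tendsto[of "(-1, 0)"]
  moreover have "\<forall>\<^sub>F s in at_right 0. - abs_moment p q \<le> (ln (mgf p q (t0 + s *\<^sub>R (-1, 0))) - ln (mgf p q t0)) / s"
  proof (rule eventually_at_rightI[of 0 1])
    fix s :: real assume s: "s \<in> {0<..<1}"
    have "integrable lborel (mgf_integrand p q (- s, 0))"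
      using integrable_mgf_integrand_mono[OF p_pos f_p_integrable[OF p_pos, folded mgf_integrand_zero[of p q]],
          of "(- s, 0)"] s by simp
    from ln_mgf_ge[OF p_pos q_nonneg this] have "- (abs_moment p q * s) \<le> ln (mgf p q (- s, 0))"
      by (simp add: mult.commute)
    moreover have "t0 + s *\<^sub>R (-1, 0) = (- s, 0)" "mgf p q t0 = 1"
      using t0 by (simp_all add: mgf_integrand_zero integral_f_p[OF p_pos])
    ultimately show "- abs_moment p q \<le> (ln (mgf p q (t0 + s *\<^sub>R (-1, 0))) - ln (mgf p q t0)) / s"
      using s by (simp add: le_divide_eq)
  qed simp
  ultimately have "- abs_moment p q \<le> x \<bullet> (-1, 0)" by (rule tendsto_lowerbound) simp
  with assms show False by (cases x) simp
qed

lemma fst_gradient_point_pos: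
  assumes x2: "snd x = 1" and x1: "abs_moment p q < fst x" and t0: "t0 \<in> D_p p"
  shows "fst t0 > 0"
proof -
  obtain a b where ab: "t0 = (a, b)" by (cases t0)
  have "a * abs_moment p q + b \<le> a * fst x + b"
    using ln_mgf_ge[OF p_pos q_nonneg integrable_at_gradient_point] ln_mgf_gradient_point_le x2
    by (cases x) (simp add: ab mult.commute)
  then have a: "a \<ge> 0" using x1 by (smt (verit) mult_less_cancel_left)
  have "a \<noteq> 0"
  proof
    assume "a = 0"
    have b: "b < 1/p" using t0 unfolding D_p_def ab by simp
    then have pb: "1 - p * b > 0" using p_pos by (simp add: field_simps)
    have "- ln (1 - p * b) / p \<le> b"
      using ln_mgf_gradient_point_le x2 mgf_snd(2)[OF p_pos b, of q] pb
      by (cases x) (simp add: ab \<open>a = 0\<close> ln_powr)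
    then have "- (p * b) \<le> ln (1 - p * b)" using p_pos by (simp add: field_simps)
    then have "1 - p * b = 1" using ln_le_minus_one[OF pb] ln_eq_minus_one[OF pb] by linarith
    then have "t0 = (0, 0)" using p_pos \<open>a = 0\<close> by (simp add: ab)
    with gradient_point_ne_origin[OF x1] show False ..
  qed
  with a show ?thesis by (simp add: ab)
qed

lemma Lambda_star_gradient_less:
  assumes x2: "snd x = 1" and pos: "fst t0 > 0"
    and t2: "t2 \<ge> 0" and region: "fst x * \<bar>t2\<bar> powr (q/p) \<le> t1" and ne: "(t1, t2) \<noteq> x"
  shows "Lambda_star p q x < Lambda_star p q (t1, t2)"
proof (cases "t2 = 0")
  case True
  then show ?thesis using Lambda_star_snd_zero[OF p_pos] Lambda_star_gradient by simp
next
  case False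
  with t2 have t2: "t2 > 0" by simp
  obtain a b where ab: "t0 = (a, b)" by (cases t0)
  define w where "w = t1 * t2 powr (-q/p)"
  have "fst x * t2 powr (q/p) * t2 powr (-q/p) \<le> w"
    unfolding w_def using region t2 by (intro mult_right_mono) auto
  moreover have "t2 powr (q/p) * t2 powr (-q/p) = 1" using t2 by (simp flip: powr_add)
  ultimately have w: "fst x \<le> w" by (simp add: mult.assoc)
  have log_gap: "0 \<le> t2 - 1 - ln t2" "t2 \<noteq> 1 \<Longrightarrow> 0 < t2 - 1 - ln t2"
    using ln_le_minus_one[OF t2] ln_eq_minus_one[OF t2] by linarith+
  have "0 < a * (w - fst x) + (t2 - 1 - ln t2) / p"
  proof (cases "t2 = 1")
    case True
    with ne x2 have "w \<noteq> fst x" unfolding w_def by (cases x) auto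
    then have "0 < a * (w - fst x)" using w pos ab by simp
    moreover have "0 \<le> (t2 - 1 - ln t2) / p" using log_gap(1) p_pos by simp
    ultimately show ?thesis by linarith
  next
    case False
    then show ?thesis using w pos log_gap(2) p_pos ab by (simp add: add_nonneg_pos)
  qed
  then have "x \<bullet> t0 - ln (mgf p q t0) < a * t1 * t2 powr (-q/p) + b - ln (mgf p q (a, b)) + (t2 - 1 - ln t2) / p"
    using x2 by (cases x) (simp add: ab w_def algebra_simps)
  also have "\<dots> \<le> Lambda_star p q (t1, t2)"
    using Lambda_star_ge_rescaled[OF p_pos q_nonneg t2] integrable_at_gradient_point by (simp add: ab)
  finally show ?thesis by (simp add: Lambda_star_gradient)
qed

lemma I_S_gradient_less:
  assumes x2: "snd x = 1" and pos: "fst t0 > 0"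
    and t1: "t1 \<ge> 0" and t2: "t2 \<ge> 0" and t3: "t3 \<le> 1"
    and region: "fst x * \<bar>t2\<bar> powr (q/p) \<le> t1 * \<bar>t3\<bar> powr q"
    and ne: "(t1, t2, t3) \<noteq> (fst x, 1, 1)"
  shows "I_S p q (fst x, 1, 1) < I_S p q (t1, t2, t3)"
proof (cases "t3 \<le> 0")
  case True
  then show ?thesis using Lambda_star_gradient x2 by (cases x) (simp add: I_S_def)
next
  case False
  then have t3_pos: "t3 > 0" by simp
  have I_S_x: "I_S p q (fst x, 1, 1) = Lambda_star p q x" using x2 by (cases x) (simp add: I_S_def)
  have "t1 * \<bar>t3\<bar> powr q \<le> t1"
    using t1 t3 t3_pos q_nonneg by (simp add: mult_left_le powr_le1)
  with region have region': "fst x * \<bar>t2\<bar> powr (q/p) \<le> t1" by linarith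
  have "Lambda_star p q x \<le> Lambda_star p q (t1, t2)"
    using Lambda_star_gradient_less[OF x2 pos t2 region'] by (cases "(t1, t2) = x") auto
  have "Lambda_star p q x < Lambda_star p q (t1, t2) - ereal (ln t3)"
  proof (cases "t3 = 1")
    case True
    with ne x2 have "(t1, t2) \<noteq> x" by (cases x) auto
    then show ?thesis using Lambda_star_gradient_less[OF x2 pos t2 region'] True by simp
  next
    case False
    with t3 t3_pos have "ln t3 < 0" by simp
    with \<open>Lambda_star p q x \<le> Lambda_star p q (t1, t2)\<close> show ?thesis
      unfolding Lambda_star_gradient by (cases "Lambda_star p q (t1, t2)") auto
  qed
  moreover have "I_S p q (t1, t2, t3) = Lambda_star p q (t1, t2) - ereal (ln t3)"
    using t3_pos by (simp add: I_S_def)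
  ultimately show ?thesis by (simp add: I_S_x)
qed

end

section \<open>The two minimisation problems\<close>

lemma INF_unique_minimizer:
  fixes f :: "'a \<Rightarrow> 'b::complete_linorder"
  assumes "a \<in> A" and "\<And>x. x \<in> A \<Longrightarrow> x \<noteq> a \<Longrightarrow> f a < f x"
  shows "f a = (INF x\<in>A. f x) \<and> (\<forall>x\<in>A. f x = (INF y\<in>A. f y) \<longrightarrow> x = a)"
proof -
  have "f a \<le> f x" if "x \<in> A" for x
    using assms(2)[OF that] by (cases "x = a") auto
  then have "f a = (INF x\<in>A. f x)"
    by (intro antisym INF_greatest INF_lower[OF assms(1)]) auto
  with assms show ?thesis by fastforce
qed

lemma powr_less_of_D_z_bound:
  fixes a b c p q z :: real
  assumes a: "a > 0" and b: "b > 0" and c: "c > 0" and p: "p > 0" and q: "q > 0" and z: "z \<ge> 0"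
    and bound: "a * b powr (1/q) * c powr (-1/p) > z"
  shows "z powr q * c powr (q/p) < b * a powr q"
proof -
  have "z powr q < (a * b powr (1/q) * c powr (-1/p)) powr q"
    by (rule powr_less_mono2[OF q z bound])
  also have "\<dots> = a powr q * b * c powr (-q/p)"
    using a b c q p by (simp add: powr_mult powr_powr)
  finally have "z powr q * c powr (q/p) < a powr q * b * c powr (-q/p) * c powr (q/p)"
    using c by (intro mult_strict_right_mono) auto
  also have "\<dots> = b * a powr q"
    using c by (simp add: powr_add[symmetric] powr_minus)
  finally show ?thesis .
qed

lemma closure_D_z_subset:
  assumes "p > 0" "q > 0" "z \<ge> 0"
  shows "closure (D_z p q z) \<subseteq> {t. 0 \<le> snd t \<and> z powr q * \<bar>snd t\<bar> powr (q/p) \<le> fst t}"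
proof (rule closure_minimal)
  show "D_z p q z \<subseteq> {t. 0 \<le> snd t \<and> z powr q * \<bar>snd t\<bar> powr (q/p) \<le> fst t}"
    using powr_less_of_D_z_bound[of 1 _ _ p q z] assms by (auto simp: D_z_def less_imp_le)
  show "closed {t :: real \<times> real. 0 \<le> snd t \<and> z powr q * \<bar>snd t\<bar> powr (q/p) \<le> fst t}"
    by (intro closed_Collect_conj closed_Collect_le continuous_intros continuous_on_powr')
      (use assms in auto)
qed

lemma closure_DD_z_subset:
  assumes "p > 0" "q > 0" "z \<ge> 0"
  shows "closure (DD_z p q z) \<subseteq> {t. 0 \<le> fst t \<and> 0 \<le> fst (snd t) \<and> snd (snd t) \<le> 1 \<and>
           z powr q * \<bar>fst (snd t)\<bar> powr (q/p) \<le> fst t * \<bar>snd (snd t)\<bar> powr q}"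
proof (rule closure_minimal)
  show "DD_z p q z \<subseteq> {t. 0 \<le> fst t \<and> 0 \<le> fst (snd t) \<and> snd (snd t) \<le> 1 \<and>
           z powr q * \<bar>fst (snd t)\<bar> powr (q/p) \<le> fst t * \<bar>snd (snd t)\<bar> powr q}"
    using powr_less_of_D_z_bound[of _ _ _ p q z] assms by (auto simp: DD_z_def less_imp_le)
  show "closed {t :: real \<times> real \<times> real. 0 \<le> fst t \<and> 0 \<le> fst (snd t) \<and> snd (snd t) \<le> 1 \<and>
           z powr q * \<bar>fst (snd t)\<bar> powr (q/p) \<le> fst t * \<bar>snd (snd t)\<bar> powr q}"
    by (intro closed_Collect_conj closed_Collect_le continuous_intros continuous_on_powr')
      (use assms in auto)
qed

lemma in_closure_D_z:
  assumes "q > 0" "z > 0"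
  shows "(z powr q, 1) \<in> closure (D_z p q z)"
  unfolding closure_approachable
proof (intro allI impI)
  fix e :: real assume e: "e > 0"
  have "(z powr q) powr (1/q) < (z powr q + e/2) powr (1/q)"
    using e assms by (intro powr_less_mono2) auto
  then have "(z powr q + e/2, 1) \<in> D_z p q z"
    unfolding D_z_def using assms e by (simp add: powr_powr add_pos_nonneg)
  moreover have "dist (z powr q + e/2, 1::real) (z powr q, 1) < e"
    using e by (simp add: dist_Pair_Pair dist_real_def)
  ultimately show "\<exists>y\<in>D_z p q z. dist y (z powr q, 1) < e" by blast
qed

lemma in_closure_DD_z:
  assumes "q > 0" "z > 0"
  shows "(z powr q, 1, 1) \<in> closure (DD_z p q z)"
  unfolding closure_approachable
proof (intro allI impI)
  fix e :: real assume e: "e > 0"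
  have "(z powr q) powr (1/q) < (z powr q + e/2) powr (1/q)"
    using e assms by (intro powr_less_mono2) auto
  then have "(z powr q + e/2, 1, 1) \<in> DD_z p q z"
    unfolding DD_z_def using assms e by (simp add: powr_powr add_pos_nonneg)
  moreover have "dist (z powr q + e/2, 1::real, 1::real) (z powr q, 1, 1) < e"
    using e by (simp add: dist_Pair_Pair dist_real_def)
  ultimately show "\<exists>y\<in>DD_z p q z. dist y (z powr q, 1, 1) < e" by blast
qed

theorem lemma4p1:
  fixes p q z :: real
  assumes "1 \<le> q" and "q < p" and "z > m_pq p q"
    and "(z powr q, 1) \<in> J_p p q"
  shows "((z powr q, 1) \<in> closure (D_z p q z)
       \<and> Lambda_star p q (z powr q, 1) = (INF x\<in>closure (D_z p q z). Lambda_star p q x)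
       \<and> (\<forall>x\<in>closure (D_z p q z).
            Lambda_star p q x = (INF y\<in>closure (D_z p q z). Lambda_star p q y) \<longrightarrow> x = (z powr q, 1)))
     \<and> ((z powr q, 1, 1) \<in> closure (DD_z p q z)
       \<and> I_S p q (z powr q, 1, 1) = (INF t\<in>closure (DD_z p q z). I_S p q t)
       \<and> (\<forall>t\<in>closure (DD_z p q z).
            I_S p q t = (INF s\<in>closure (DD_z p q z). I_S p q s) \<longrightarrow> t = (z powr q, 1, 1)))"
proof -
  have p: "p > 0" and q: "q > 0" using assms(1,2) by auto
  have "m_pq p q \<ge> 0" unfolding m_pq_def by simp
  with assms(3) have z: "z > 0" by linarith
  obtain t0 where t0: "t0 \<in> D_p p"
    and gradient: "((\<lambda>\<sigma>. ln (mgf p q \<sigma>)) has_derivative (\<lambda>h. (z powr q, 1) \<bullet> h)) (at t0)"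
    using assms(4) unfolding J_p_def by blast
  interpret mgf_gradient p q "(z powr q, 1)" t0
    using p q gradient by unfold_locales (auto simp: zero_prod_def)
  have t0_pos: "fst t0 > 0"
    using fst_gradient_point_pos t0 abs_moment_less_powr[OF p q assms(3)] by simp
  have "x \<in> closure (D_z p q z) \<Longrightarrow> x \<noteq> (z powr q, 1)
          \<Longrightarrow> Lambda_star p q (z powr q, 1) < Lambda_star p q x" for x
    using closure_D_z_subset[OF p q less_imp_le[OF z]] Lambda_star_gradient_less[OF _ t0_pos]
    by (cases x) auto
  moreover have "t \<in> closure (DD_z p q z) \<Longrightarrow> t \<noteq> (z powr q, 1, 1)
          \<Longrightarrow> I_S p q (z powr q, 1, 1) < I_S p q t" for t
    using closure_DD_z_subset[OF p q less_imp_le[OF z]] I_S_gradient_less[OF _ t0_pos]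
    by (cases t) auto
  ultimately show ?thesis
    using INF_unique_minimizer[of "(z powr q, 1)" "closure (D_z p q z)" "Lambda_star p q"]
      INF_unique_minimizer[of "(z powr q, 1, 1)" "closure (DD_z p q z)" "I_S p q"]
      in_closure_D_z[OF q z] in_closure_DD_z[OF q z] by blast
qed

end
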